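(* Let $X$, $M$ be sets with functions $\mathsf{upd}_X : X \to X$ and $\mathsf{upd}_M : M \to M$, and let $\mu : X \to M$ be a surjective function with $\mu \circ \mathsf{upd}_X = \mathsf{upd}_M \circ \mu$. Define the deterministic map $c : X \times M \to M$, $c(y,m) = \mathsf{upd}_M(m)$; the interpretation map $\psi = \mu^{-1} : M \to \mathcal{P}^+(X)$, $\mu^{-1}(m) = \{x \mid \mu(x) = m\}$; and the possibilistic hidden Markov model $\kappa : X \to \mathcal{P}^+(X \times X)$, $\kappa(x) = \{(x', x) \mid x' \in X,\ \mu(x') = \mu(\mathsf{upd}_X(x))\}$ (first component the updated hidden state, second component the observation). Then $(\psi, \kappa)$ is a Bayesian filtering interpretation of $c$ in $\mathbf{Rel}^+$, i.e. the consistency equation holds: for every $m \in M$, $$\{(x',y) \mid \exists x \in \psi(m),\ (x',y) \in \kappa(x)\} = \{(x',y) \mid y \in Y_m,\ x' \in \psi(c(y,m))\},$$ where $Y_m = \{y \mid \exists x \in \psi(m),\ \exists x',\ (x',y) \in \kappa(x)\}$.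
   Context: $\mathcal{P}^+(Y)$ denotes the non-empty subsets of $Y$; $\mathbf{Rel}^+$ is the Markov category of sets and left-total relations $X \to \mathcal{P}^+(Y)$ with relational composition, cartesian product as tensor, copy $x \mapsto \{(x,x)\}$ and delete. Given a deterministic map $c : Y \times \Theta \to \Theta$, a Bayesian filtering interpretation of $c$ is a pair of a morphism $\psi: \Theta \to \mathcal{P}^+(X)$ (interpretation map) and $\kappa : X \to \mathcal{P}^+(X \times Y)$ (hidden Markov model) such that the joint "distribution" over (next hidden state, observation) obtained by sampling $x \in \psi(\theta)$ and then $\kappa(x)$ equals the one obtained by sampling the observation $y$ from its marginal and then the next hidden state from $\psi(c(y,\theta))$; in $\mathbf{Rel}^+$ this is the displayed set equality. *)

theory Defs
  imports Main
begin

text \<open>Rel+ morphisms A -> P+(B) are modelled as functions to sets with non-empty values.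
Sets X, Y, Theta are modelled as types.\<close>

definition rel_plus_morphism :: "('a \<Rightarrow> 'b set) \<Rightarrow> bool" where
  "rel_plus_morphism f \<longleftrightarrow> (\<forall>a. f a \<noteq> {})"

definition bayes_filter_interp ::
  "('y \<Rightarrow> 'th \<Rightarrow> 'th) \<Rightarrow> ('th \<Rightarrow> 'x set) \<Rightarrow> ('x \<Rightarrow> ('x \<times> 'y) set) \<Rightarrow> bool" where
  "bayes_filter_interp c psi kappa \<longleftrightarrow>
     rel_plus_morphism psi \<and> rel_plus_morphism kappa \<and>
     (\<forall>th. {(x', y). \<exists>x \<in> psi th. (x', y) \<in> kappa x}
          = {(x', y). y \<in> {y. \<exists>x \<in> psi th. \<exists>x'. (x', y) \<in> kappa x} \<and> x' \<in> psi (c y th)})"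

definition preimage_interp :: "('x \<Rightarrow> 'm) \<Rightarrow> 'm \<Rightarrow> 'x set" where
  "preimage_interp mu m = {x. mu x = m}"

definition det_hmm :: "('x \<Rightarrow> 'm) \<Rightarrow> ('x \<Rightarrow> 'x) \<Rightarrow> 'x \<Rightarrow> ('x \<times> 'x) set" where
  "det_hmm mu updX x = {(x', x) | x'. mu x' = mu (updX x)}"

end

theory Submission
  imports Defs
begin

text \<open>The observation emitted by the hidden Markov model is the previous hidden state itself,
so the observations possible under the belief \<open>m\<close> are exactly the fibre of \<open>\<mu>\<close> over \<open>m\<close>.
Every such observation \<open>y\<close> sends the next hidden state into the fibre over
\<open>\<mu> (upd\<^sub>X y) = upd\<^sub>M m\<close>, which does not depend on \<open>y\<close>; hence the joint relation is the product
of the fibres over \<open>m\<close> and \<open>upd\<^sub>M m\<close>. Surjectivity of \<open>\<mu>\<close> is needed only to make the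
fibres non-empty.\<close>

lemma rel_plus_morphism_preimage_interp_iff:
  "rel_plus_morphism (preimage_interp mu) \<longleftrightarrow> surj mu"
  unfolding rel_plus_morphism_def preimage_interp_def by (auto simp: surj_def eq_commute)

lemma rel_plus_morphism_det_hmm: "rel_plus_morphism (det_hmm mu updX)"
  unfolding rel_plus_morphism_def det_hmm_def by blast

lemma det_hmm_observations:
  "{y. \<exists>x \<in> preimage_interp mu m. \<exists>x'. (x', y) \<in> det_hmm mu updX x} = preimage_interp mu m"
  unfolding preimage_interp_def det_hmm_def by blast

lemma det_hmm_joint:
  "{(x', y). \<exists>x \<in> preimage_interp mu m. (x', y) \<in> det_hmm mu updX x}
     = {(x', y). mu y = m \<and> mu x' = mu (updX y)}"
  unfolding preimage_interp_def det_hmm_def by blast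

lemma det_hmm_consistent:
  assumes "mu \<circ> updX = updM \<circ> mu"
  shows "{(x', y). \<exists>x \<in> preimage_interp mu m. (x', y) \<in> det_hmm mu updX x}
     = {(x', y). y \<in> {y. \<exists>x \<in> preimage_interp mu m. \<exists>x'. (x', y) \<in> det_hmm mu updX x}
                 \<and> x' \<in> preimage_interp mu (updM m)}"
proof -
  have "mu (updX y) = updM (mu y)" for y
    using assms by (simp add: fun_eq_iff)
  then show ?thesis
    unfolding det_hmm_joint det_hmm_observations by (auto simp: preimage_interp_def)
qed

theorem theorem3:
  fixes updX :: "'x \<Rightarrow> 'x" and updM :: "'m \<Rightarrow> 'm" and mu :: "'x \<Rightarrow> 'm"
  assumes "surj mu"
    and "mu \<circ> updX = updM \<circ> mu"
  shows "bayes_filter_interp (\<lambda>(y::'x) m. updM m) (preimage_interp mu) (det_hmm mu updX)"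
  unfolding bayes_filter_interp_def
  using assms det_hmm_consistent[OF assms(2)]
  by (simp add: rel_plus_morphism_preimage_interp_iff rel_plus_morphism_det_hmm)

end
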